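(* Let $H$ be a graph whose number $c(H)$ of connected components satisfies $c(H)\ge 2$. (a) If $c(H)\ge 4$, then $O_{\rm SR}(K_1\odot H)=\mathcal{B}$. (b) If $c(H)=3$, then $O_{\rm SR}(K_1\odot H)=\mathcal{N}$ if $H\cong 3K_1$, and $O_{\rm SR}(K_1\odot H)=\mathcal{B}$ otherwise. (c) If $c(H)=2$, then $O_{\rm SR}(K_1\odot H)=\mathcal{M}$ if $H\cong 2K_1$; $O_{\rm SR}(K_1\odot H)=\mathcal{N}$ if $H\in\{K_1\cup K_2, K_1\cup P_3\}$ or $H\cong K_1\cup H^*$, where $H^*$ is a connected graph of order $m\ge 4$ such that $\deg_{H^*}(w)\in\{m-2,m-1\}$ for each $w\in V(H^* )$ and at most two vertices of $H^*$ have degree $m-1$; and $O_{\rm SR}(K_1\odot H)=\mathcal{B}$ otherwise.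
   Context: All graphs are finite, simple and undirected. $P_n,K_n$ denote the path and complete graph on $n$ vertices; $kK_1$ is the edgeless graph on $k$ vertices and $\cup$ denotes disjoint union. $K_1\odot H$ (the corona product of $K_1$ with $H$) is the graph obtained from $H$ by adding one new vertex adjacent to every vertex of $H$. A set $S\subseteq V(X)$ is a strong resolving set of a connected graph $X$ if for all distinct $x,y\in V(X)$ there exists $z\in S$ such that $x$ lies on a $y$–$z$ geodesic or $y$ lies on an $x$–$z$ geodesic. The Maker–Breaker strong resolving game on $X$: Maker and Breaker alternately select a not-yet-chosen vertex of $X$; Maker wins if the vertices he selects contain a strong resolving set of $X$, Breaker wins otherwise. In the M-game Maker moves first, in the B-game Breaker moves first. $O_{\rm SR}(X)=\mathcal{M}$ if Maker has a winning strategy in both games, $\mathcal{B}$ if Breaker has a winning strategy in both, and $\mathcal{N}$ if the first player has a winning strategy in each. *)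

theory Defs
  imports Main
begin

definition graph :: "'a set \<Rightarrow> ('a \<Rightarrow> 'a \<Rightarrow> bool) \<Rightarrow> bool" where
  "graph V E \<longleftrightarrow> finite V \<and> (\<forall>x y. E x y \<longrightarrow> x \<in> V \<and> y \<in> V)
     \<and> (\<forall>x y. E x y \<longrightarrow> E y x) \<and> (\<forall>x. \<not> E x x)"

definition walk :: "('a \<Rightarrow> 'a \<Rightarrow> bool) \<Rightarrow> 'a list \<Rightarrow> bool" where
  "walk E xs \<longleftrightarrow> xs \<noteq> [] \<and> (\<forall>i. Suc i < length xs \<longrightarrow> E (xs ! i) (xs ! Suc i))"

definition walk_from_to :: "('a \<Rightarrow> 'a \<Rightarrow> bool) \<Rightarrow> 'a \<Rightarrow> 'a \<Rightarrow> 'a list \<Rightarrow> bool" where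
  "walk_from_to E x y xs \<longleftrightarrow> walk E xs \<and> hd xs = x \<and> last xs = y"

definition reachable :: "('a \<Rightarrow> 'a \<Rightarrow> bool) \<Rightarrow> 'a \<Rightarrow> 'a \<Rightarrow> bool" where
  "reachable E x y \<longleftrightarrow> (\<exists>xs. walk_from_to E x y xs)"

definition connected_graph :: "'a set \<Rightarrow> ('a \<Rightarrow> 'a \<Rightarrow> bool) \<Rightarrow> bool" where
  "connected_graph V E \<longleftrightarrow> V \<noteq> {} \<and> (\<forall>x\<in>V. \<forall>y\<in>V. reachable E x y)"

definition num_components :: "'a set \<Rightarrow> ('a \<Rightarrow> 'a \<Rightarrow> bool) \<Rightarrow> nat" where
  "num_components V E = card ((\<lambda>x. {y\<in>V. reachable E x y}) ` V)"

definition dist :: "('a \<Rightarrow> 'a \<Rightarrow> bool) \<Rightarrow> 'a \<Rightarrow> 'a \<Rightarrow> nat" where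
  "dist E x y = (LEAST n. \<exists>xs. walk_from_to E x y xs \<and> length xs = Suc n)"

definition on_geodesic :: "('a \<Rightarrow> 'a \<Rightarrow> bool) \<Rightarrow> 'a \<Rightarrow> 'a \<Rightarrow> 'a \<Rightarrow> bool" where
  "on_geodesic E y z x \<longleftrightarrow>
     (\<exists>xs. walk_from_to E y z xs \<and> length xs = Suc (dist E y z) \<and> x \<in> set xs)"

definition strong_resolving :: "'a set \<Rightarrow> ('a \<Rightarrow> 'a \<Rightarrow> bool) \<Rightarrow> 'a set \<Rightarrow> bool" where
  "strong_resolving V E S \<longleftrightarrow> S \<subseteq> V \<and>
     (\<forall>x\<in>V. \<forall>y\<in>V. x \<noteq> y \<longrightarrow> (\<exists>z\<in>S. on_geodesic E y z x \<or> on_geodesic E x z y))"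

definition contains_sr :: "'a set \<Rightarrow> ('a \<Rightarrow> 'a \<Rightarrow> bool) \<Rightarrow> 'a set \<Rightarrow> bool" where
  "contains_sr V E M \<longleftrightarrow> (\<exists>S\<subseteq>M. strong_resolving V E S)"

text \<open>Position: Maker's set M, Breaker's set B,
  and a flag that is True iff it is Maker's turn.
  maker_wins: Maker can force that his vertices contain a strong resolving set.
  breaker_wins: Breaker can force that the game ends (no free vertices) with Maker's
  vertices containing no strong resolving set.\<close>
inductive maker_wins :: "'a set \<Rightarrow> ('a \<Rightarrow> 'a \<Rightarrow> bool) \<Rightarrow> 'a set \<Rightarrow> 'a set \<Rightarrow> bool \<Rightarrow> bool"
  for V E where
  mw_done: "contains_sr V E M \<Longrightarrow> maker_wins V E M B t"
| mw_maker: "v \<in> V - (M \<union> B) \<Longrightarrow> maker_wins V E (insert v M) B False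
               \<Longrightarrow> maker_wins V E M B True"
| mw_breaker: "V - (M \<union> B) \<noteq> {} \<Longrightarrow> (\<forall>v \<in> V - (M \<union> B). maker_wins V E M (insert v B) True)
               \<Longrightarrow> maker_wins V E M B False"

inductive breaker_wins :: "'a set \<Rightarrow> ('a \<Rightarrow> 'a \<Rightarrow> bool) \<Rightarrow> 'a set \<Rightarrow> 'a set \<Rightarrow> bool \<Rightarrow> bool"
  for V E where
  bw_end: "V - (M \<union> B) = {} \<Longrightarrow> \<not> contains_sr V E M \<Longrightarrow> breaker_wins V E M B t"
| bw_breaker: "\<not> contains_sr V E M \<Longrightarrow> v \<in> V - (M \<union> B) \<Longrightarrow> breaker_wins V E M (insert v B) True
               \<Longrightarrow> breaker_wins V E M B False"
| bw_maker: "\<not> contains_sr V E M \<Longrightarrow> V - (M \<union> B) \<noteq> {}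
               \<Longrightarrow> (\<forall>v \<in> V - (M \<union> B). breaker_wins V E (insert v M) B False)
               \<Longrightarrow> breaker_wins V E M B True"

text \<open>M-game: Maker moves first; B-game: Breaker moves first.\<close>
definition maker_wins_Mgame where "maker_wins_Mgame V E \<longleftrightarrow> maker_wins V E {} {} True"
definition maker_wins_Bgame where "maker_wins_Bgame V E \<longleftrightarrow> maker_wins V E {} {} False"
definition breaker_wins_Mgame where "breaker_wins_Mgame V E \<longleftrightarrow> breaker_wins V E {} {} True"
definition breaker_wins_Bgame where "breaker_wins_Bgame V E \<longleftrightarrow> breaker_wins V E {} {} False"

definition outcome_M where "outcome_M V E \<longleftrightarrow> maker_wins_Mgame V E \<and> maker_wins_Bgame V E"
definition outcome_B where "outcome_B V E \<longleftrightarrow> breaker_wins_Mgame V E \<and> breaker_wins_Bgame V E"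
definition outcome_N where "outcome_N V E \<longleftrightarrow> maker_wins_Mgame V E \<and> breaker_wins_Bgame V E"

text \<open>Corona K1 \<odot> H: the new vertex is None, vertices of H are Some v.\<close>
definition corona_V :: "'a set \<Rightarrow> 'a option set" where
  "corona_V V = insert None (Some ` V)"

fun corona_E :: "'a set \<Rightarrow> ('a \<Rightarrow> 'a \<Rightarrow> bool) \<Rightarrow> 'a option \<Rightarrow> 'a option \<Rightarrow> bool" where
  "corona_E V E None None = False"
| "corona_E V E None (Some b) = (b \<in> V)"
| "corona_E V E (Some a) None = (a \<in> V)"
| "corona_E V E (Some a) (Some b) = E a b"

definition graph_iso :: "'a set \<Rightarrow> ('a \<Rightarrow> 'a \<Rightarrow> bool) \<Rightarrow> 'b set \<Rightarrow> ('b \<Rightarrow> 'b \<Rightarrow> bool) \<Rightarrow> bool" where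
  "graph_iso V1 E1 V2 E2 \<longleftrightarrow>
     (\<exists>f. bij_betw f V1 V2 \<and> (\<forall>x\<in>V1. \<forall>y\<in>V1. E1 x y \<longleftrightarrow> E2 (f x) (f y)))"

definition empty_graph_V :: "nat \<Rightarrow> nat set" where "empty_graph_V k = {0..<k}"
definition empty_graph_E :: "nat \<Rightarrow> nat \<Rightarrow> bool" where "empty_graph_E x y = False"

definition K1K2_V :: "nat set" where "K1K2_V = {0, 1, 2}"
definition K1K2_E :: "nat \<Rightarrow> nat \<Rightarrow> bool" where
  "K1K2_E x y \<longleftrightarrow> {x, y} = {1, 2}"

definition K1P3_V :: "nat set" where "K1P3_V = {0, 1, 2, 3}"
definition K1P3_E :: "nat \<Rightarrow> nat \<Rightarrow> bool" where
  "K1P3_E x y \<longleftrightarrow> {x, y} = {1, 2} \<or> {x, y} = {2, 3}"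

definition degree :: "'a set \<Rightarrow> ('a \<Rightarrow> 'a \<Rightarrow> bool) \<Rightarrow> 'a \<Rightarrow> nat" where
  "degree V E w = card {v \<in> V. E w v}"

definition induced :: "'a set \<Rightarrow> ('a \<Rightarrow> 'a \<Rightarrow> bool) \<Rightarrow> 'a \<Rightarrow> 'a \<Rightarrow> bool" where
  "induced W E x y \<longleftrightarrow> E x y \<and> x \<in> W \<and> y \<in> W"

definition special_Hstar :: "'a set \<Rightarrow> ('a \<Rightarrow> 'a \<Rightarrow> bool) \<Rightarrow> bool" where
  "special_Hstar W F \<longleftrightarrow> connected_graph W F \<and> card W \<ge> 4 \<and>
     (\<forall>w\<in>W. degree W F w = card W - 2 \<or> degree W F w = card W - 1) \<and>
     card {w\<in>W. degree W F w = card W - 1} \<le> 2"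

definition K1_union_special :: "'a set \<Rightarrow> ('a \<Rightarrow> 'a \<Rightarrow> bool) \<Rightarrow> bool" where
  "K1_union_special V E \<longleftrightarrow> (\<exists>u\<in>V. (\<forall>w. \<not> E u w) \<and>
      special_Hstar (V - {u}) (induced (V - {u}) E))"

end

theory Submission
  imports Defs
begin

text \<open>In \<open>K\<^sub>1 \<odot> H\<close> any two vertices are at distance at most 2. If \<open>H\<close> has no universal
  vertex, which holds as soon as \<open>H\<close> is disconnected, a set of vertices of the corona is strong
  resolving iff it meets every mutually maximally distant pair; these pairs are the non-adjacent
  pairs and the adjacent true twins of \<open>H\<close>. So the game is a Maker-Breaker game on the vertex
  covers of this strong resolving graph \<open>R\<close>: Breaker moving first wins iff some vertex has two
  \<open>R\<close>-neighbours, and Maker moving first wins iff deleting one vertex leaves a matching.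

  Vertices in different components of \<open>H\<close> are \<open>R\<close>-adjacent, so with four components, or with
  fewer components but enough vertices, \<open>R\<close> contains a 4-cycle, which keeps a vertex with two
  neighbours after any deletion. What remains is an isolated vertex next to a connected graph
  \<open>W\<close>, and \<open>R\<close> restricted to \<open>W\<close> is a matching iff every vertex of \<open>W\<close> has at most one
  non-neighbour in \<open>W\<close> and at most two vertices of \<open>W\<close> are universal; this singles out
  \<open>K\<^sub>2\<close>, \<open>P\<^sub>3\<close> and the graphs \<open>H*\<close>.\<close>

lemma walk_Cons: "xs \<noteq> [] \<Longrightarrow> walk E (x # xs) \<longleftrightarrow> E x (hd xs) \<and> walk E xs"
  by (cases xs) (auto simp: walk_def nth_Cons split: nat.splits)

lemma walk_singleton [simp]: "walk E [x]"
  by (simp add: walk_def)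

lemma walk_Cons_Cons [simp]: "walk E (x # y # xs) \<longleftrightarrow> E x y \<and> walk E (y # xs)"
  by (simp add: walk_Cons)

lemma walk_from_to_rtranclp: "walk_from_to E x y xs \<Longrightarrow> E\<^sup>*\<^sup>* x y"
proof (induction xs arbitrary: x)
  case (Cons a xs)
  then show ?case
    by (cases xs) (auto simp: walk_from_to_def walk_Cons intro: converse_rtranclp_into_rtranclp)
qed (simp add: walk_from_to_def walk_def)

lemma rtranclp_walk_from_to: "E\<^sup>*\<^sup>* x y \<Longrightarrow> \<exists>xs. walk_from_to E x y xs"
proof (induction rule: converse_rtranclp_induct)
  case base
  show ?case by (rule exI[of _ "[y]"]) (simp add: walk_from_to_def)
next
  case (step x z)
  then obtain xs where "walk_from_to E z y xs" by blast
  then have "xs \<noteq> []" "hd xs = z" "last xs = y" "walk E xs"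
    by (auto simp: walk_from_to_def walk_def)
  with step(1) show ?case
    by (intro exI[of _ "x # xs"]) (simp add: walk_from_to_def walk_Cons)
qed

lemma reachable_iff_rtranclp: "reachable E x y \<longleftrightarrow> E\<^sup>*\<^sup>* x y"
  unfolding reachable_def by (metis walk_from_to_rtranclp rtranclp_walk_from_to)

lemma reachable_refl [simp]: "reachable E x x"
  by (simp add: reachable_iff_rtranclp)

lemma reachable_edge: "E x y \<Longrightarrow> reachable E x y"
  by (simp add: reachable_iff_rtranclp)

lemma reachable_trans: "reachable E x y \<Longrightarrow> reachable E y z \<Longrightarrow> reachable E x z"
  by (simp add: reachable_iff_rtranclp)

lemma reachable_sym:
  assumes "graph V E" "reachable E x y"
  shows "reachable E y x"
proof -
  have "symp E" using assms(1) by (simp add: graph_def symp_def)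
  then show ?thesis using assms(2) unfolding reachable_iff_rtranclp by (rule sympD[OF symp_rtranclp])
qed

lemma reachable_neighbour: "reachable E x y \<Longrightarrow> x \<noteq> y \<Longrightarrow> \<exists>z. E x z"
  unfolding reachable_iff_rtranclp by (metis converse_rtranclpE)

lemma reachable_induced:
  assumes "reachable E x y" "x \<in> W" and closed: "\<And>a b. E a b \<Longrightarrow> a \<in> W \<Longrightarrow> b \<in> W"
  shows "reachable (induced W E) x y"
proof -
  have "E\<^sup>*\<^sup>* x y" using assms(1) by (simp add: reachable_iff_rtranclp)
  then have "(induced W E)\<^sup>*\<^sup>* x y \<and> y \<in> W"
  proof (induction rule: rtranclp_induct)
    case (step y z)
    then have "induced W E y z" using closed by (simp add: induced_def)
    with step show ?case using closed by (metis rtranclp.rtrancl_into_rtrancl)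
  qed (use assms(2) in simp)
  then show ?thesis by (simp add: reachable_iff_rtranclp)
qed

lemma dist_le_walk: "walk_from_to E x y xs \<Longrightarrow> dist E x y \<le> length xs - 1"
  unfolding dist_def by (rule Least_le) (auto simp: walk_from_to_def walk_def)

lemma dist_attained:
  assumes "reachable E x y"
  obtains xs where "walk_from_to E x y xs" "length xs = Suc (dist E x y)"
proof -
  obtain xs where xs: "walk_from_to E x y xs" using assms unfolding reachable_def by blast
  then have "length xs = Suc (length xs - 1)" by (simp add: walk_from_to_def walk_def)
  with xs have "\<exists>n xs. walk_from_to E x y xs \<and> length xs = Suc n" by blast
  then have "\<exists>xs. walk_from_to E x y xs \<and> length xs = Suc (dist E x y)"
    unfolding dist_def by (rule LeastI_ex)
  then show ?thesis using that by blast
qed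

lemma dist_eq_0_iff: "reachable E x y \<Longrightarrow> dist E x y = 0 \<longleftrightarrow> x = y"
proof
  assume "reachable E x y" "dist E x y = 0"
  then show "x = y" by (elim dist_attained) (auto simp: walk_from_to_def length_Suc_conv)
next
  assume "x = y"
  then show "dist E x y = 0"
    using dist_le_walk[of E x x "[x]"] by (simp add: walk_from_to_def)
qed

lemma dist_le_1_iff: "reachable E x y \<Longrightarrow> dist E x y \<le> 1 \<longleftrightarrow> x = y \<or> E x y"
proof
  assume "reachable E x y" "dist E x y \<le> 1"
  then show "x = y \<or> E x y"
    by (elim dist_attained) (auto simp: walk_from_to_def length_Suc_conv le_Suc_eq)
next
  assume "x = y \<or> E x y"
  then show "dist E x y \<le> 1"
    using dist_le_walk[of E x y "[x]"] dist_le_walk[of E x y "[x, y]"]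
    by (auto simp: walk_from_to_def)
qed

section \<open>Geodesics in the corona\<close>

lemma corona_E_apex: "y \<in> corona_V V \<Longrightarrow> y \<noteq> None \<Longrightarrow> corona_E V E None y \<and> corona_E V E y None"
  by (auto simp: corona_V_def)

lemma corona_short_walk:
  assumes "x \<in> corona_V V" "y \<in> corona_V V"
  obtains xs where "walk_from_to (corona_E V E) x y xs" "length xs \<le> 3"
proof (cases "x = y \<or> corona_E V E x y")
  case True
  then show ?thesis
    using that[of "[x]"] that[of "[x, y]"] by (auto simp: walk_from_to_def)
next
  case False
  then have "corona_E V E x None" "corona_E V E None y"
    using assms corona_E_apex by metis+
  then show ?thesis using that[of "[x, None, y]"] by (simp add: walk_from_to_def)
qed

lemma reachable_corona: "x \<in> corona_V V \<Longrightarrow> y \<in> corona_V V \<Longrightarrow> reachable (corona_E V E) x y"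
  unfolding reachable_def by (metis corona_short_walk)

lemma dist_corona:
  assumes "x \<in> corona_V V" "y \<in> corona_V V"
  shows "dist (corona_E V E) x y = (if x = y then 0 else if corona_E V E x y then 1 else 2)"
proof -
  have reach: "reachable (corona_E V E) x y" using assms by (rule reachable_corona)
  obtain xs where "walk_from_to (corona_E V E) x y xs" "length xs \<le> 3"
    using assms by (rule corona_short_walk)
  then have "dist (corona_E V E) x y \<le> 2" using dist_le_walk by fastforce
  then show ?thesis using dist_eq_0_iff[OF reach] dist_le_1_iff[OF reach] by auto
qed

lemma on_geodesic_corona_iff:
  assumes "y \<in> corona_V V" "z \<in> corona_V V"
  shows "on_geodesic (corona_E V E) y z x \<longleftrightarrow>
    x = y \<or> x = z \<or> (y \<noteq> z \<and> \<not> corona_E V E y z \<and> corona_E V E y x \<and> corona_E V E x z)"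
proof
  assume "on_geodesic (corona_E V E) y z x"
  then obtain xs where "walk_from_to (corona_E V E) y z xs" "x \<in> set xs"
    "length xs = Suc (dist (corona_E V E) y z)"
    unfolding on_geodesic_def by blast
  then show "x = y \<or> x = z \<or> (y \<noteq> z \<and> \<not> corona_E V E y z \<and> corona_E V E y x \<and> corona_E V E x z)"
    using dist_corona[OF assms]
    by (auto simp: walk_from_to_def length_Suc_conv numeral_2_eq_2 split: if_splits)
next
  assume x: "x = y \<or> x = z \<or> (y \<noteq> z \<and> \<not> corona_E V E y z \<and> corona_E V E y x \<and> corona_E V E x z)"
  show "on_geodesic (corona_E V E) y z x"
  proof (cases "x = y \<or> x = z")
    case True
    obtain xs where "walk_from_to (corona_E V E) y z xs" "length xs = Suc (dist (corona_E V E) y z)"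
      using reachable_corona[OF assms] by (rule dist_attained)
    with True show ?thesis
      unfolding on_geodesic_def walk_from_to_def by (metis hd_in_set last_in_set walk_def)
  next
    case False
    with x show ?thesis
      unfolding on_geodesic_def using dist_corona[OF assms]
      by (intro exI[of _ "[y, x, z]"]) (simp add: walk_from_to_def)
  qed
qed

section \<open>Strong resolving sets of the corona\<close>

text \<open>The pairs of vertices of \<open>H\<close> that are mutually maximally distant in \<open>K\<^sub>1 \<odot> H\<close>:
  non-adjacent pairs and adjacent true twins. Lifted to the corona by \<open>corona_mmd\<close>, they are the
  edges of its strong resolving graph, the apex being in no such pair when \<open>H\<close> has no universal
  vertex.\<close>

definition mmd_pair :: "'a set \<Rightarrow> ('a \<Rightarrow> 'a \<Rightarrow> bool) \<Rightarrow> 'a \<Rightarrow> 'a \<Rightarrow> bool" where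
  "mmd_pair V E a b \<longleftrightarrow> a \<in> V \<and> b \<in> V \<and> a \<noteq> b \<and>
     (\<not> E a b \<or> (\<forall>w\<in>V. (E a w \<or> w = a) \<longleftrightarrow> (E b w \<or> w = b)))"

definition corona_mmd :: "'a set \<Rightarrow> ('a \<Rightarrow> 'a \<Rightarrow> bool) \<Rightarrow> 'a option \<Rightarrow> 'a option \<Rightarrow> bool" where
  "corona_mmd V E x y \<longleftrightarrow> (\<exists>a b. x = Some a \<and> y = Some b \<and> mmd_pair V E a b)"

definition universal_vertices :: "'a set \<Rightarrow> ('a \<Rightarrow> 'a \<Rightarrow> bool) \<Rightarrow> 'a set" where
  "universal_vertices V E = {x \<in> V. \<forall>y\<in>V. y \<noteq> x \<longrightarrow> E x y}"

lemma mmd_pair_sym: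
  assumes "graph V E" "mmd_pair V E a b"
  shows "mmd_pair V E b a"
proof -
  have "E b a \<Longrightarrow> E a b" using assms(1) by (simp add: graph_def)
  then show ?thesis using assms(2) unfolding mmd_pair_def by auto
qed

lemma corona_mmd_sym: "graph V E \<Longrightarrow> corona_mmd V E x y \<Longrightarrow> corona_mmd V E y x"
  unfolding corona_mmd_def using mmd_pair_sym by metis

lemma corona_mmd_in_corona_V: "corona_mmd V E x y \<Longrightarrow> x \<in> corona_V V \<and> y \<in> corona_V V \<and> x \<noteq> y"
  by (auto simp: corona_mmd_def mmd_pair_def corona_V_def)

lemma corona_mmd_Some [simp]: "corona_mmd V E (Some a) (Some b) \<longleftrightarrow> mmd_pair V E a b"
  by (simp add: corona_mmd_def)

lemma mmd_pair_if_unreachable: "a \<in> V \<Longrightarrow> b \<in> V \<Longrightarrow> \<not> reachable E a b \<Longrightarrow> mmd_pair V E a b"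
  unfolding mmd_pair_def using reachable_edge by fastforce

lemma on_geodesic_corona_mmd:
  assumes g: "graph V E" and xy: "corona_mmd V E x y" and z: "z \<in> corona_V V"
    and geo: "on_geodesic (corona_E V E) y z x"
  shows "z = x"
proof (rule ccontr)
  assume "z \<noteq> x"
  obtain a b where ab: "x = Some a" "y = Some b" "mmd_pair V E a b"
    using xy by (auto simp: corona_mmd_def)
  have "y \<in> corona_V V" "x \<noteq> y" using corona_mmd_in_corona_V[OF xy] by simp_all
  with geo \<open>z \<noteq> x\<close> have "y \<noteq> z" "\<not> corona_E V E y z" "corona_E V E y x" "corona_E V E x z"
    by (simp_all add: on_geodesic_corona_iff[OF _ z])
  then obtain c where c: "z = Some c" "c \<noteq> b" "E a c" "\<not> E b c" "E b a"
    using ab by (cases z) (auto simp: mmd_pair_def)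
  have "E a b" "c \<in> V" using g c unfolding graph_def by blast+
  then show False using ab(3) c unfolding mmd_pair_def by blast
qed

lemma on_geodesic_apex:
  assumes "b \<in> V" "universal_vertices V E = {}"
  shows "\<exists>z. corona_mmd V E (Some b) z \<and> on_geodesic (corona_E V E) (Some b) z None"
proof -
  obtain c where "c \<in> V" "c \<noteq> b" "\<not> E b c"
    using assms unfolding universal_vertices_def by blast
  then show ?thesis using assms(1)
    by (intro exI[of _ "Some c"]) (simp add: mmd_pair_def on_geodesic_corona_iff corona_V_def)
qed

lemma on_geodesic_private_neighbour:
  assumes g: "graph V E" and "E a b" "E a w" "\<not> E b w" "w \<noteq> b"
  shows "\<exists>z. corona_mmd V E (Some b) z \<and> on_geodesic (corona_E V E) (Some b) z (Some a)"
proof -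
  have "a \<in> V" "b \<in> V" "w \<in> V" "E b a" using g assms unfolding graph_def by blast+
  with assms show ?thesis
    by (intro exI[of _ "Some w"]) (simp add: mmd_pair_def on_geodesic_corona_iff corona_V_def)
qed

lemma corona_pair_resolved:
  assumes g: "graph V E" and nu: "universal_vertices V E = {}"
    and x: "x \<in> corona_V V" and y: "y \<in> corona_V V" and "x \<noteq> y" and nmmd: "\<not> corona_mmd V E x y"
  shows "\<exists>z. (corona_mmd V E y z \<and> on_geodesic (corona_E V E) y z x)
           \<or> (corona_mmd V E x z \<and> on_geodesic (corona_E V E) x z y)"
proof (cases x)
  case None
  with \<open>x \<noteq> y\<close> y obtain b where "y = Some b" "b \<in> V" by (auto simp: corona_V_def)
  then show ?thesis using on_geodesic_apex[OF _ nu] None by blast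
next
  case (Some a)
  show ?thesis
  proof (cases y)
    case None
    with Some x show ?thesis using on_geodesic_apex[OF _ nu] by (auto simp: corona_V_def)
  next
    case (Some b)
    with \<open>x = Some a\<close> \<open>x \<noteq> y\<close> x y nmmd obtain w where
      "E a b" "w \<in> V" "(E a w \<or> w = a) \<noteq> (E b w \<or> w = b)"
      by (auto simp: mmd_pair_def corona_V_def)
    moreover have "E b a" using \<open>E a b\<close> g unfolding graph_def by blast
    ultimately consider "E a w" "\<not> E b w" "w \<noteq> b" | "E b w" "\<not> E a w" "w \<noteq> a"
      by blast
    then show ?thesis
    proof cases
      case 1
      then show ?thesis using on_geodesic_private_neighbour[OF g \<open>E a b\<close>] \<open>x = Some a\<close> Some
        by blast
    next
      case 2
      then show ?thesis using on_geodesic_private_neighbour[OF g \<open>E b a\<close>] \<open>x = Some a\<close> Some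
        by blast
    qed
  qed
qed

lemma cover_if_strong_resolving_corona:
  assumes g: "graph V E" and S: "strong_resolving (corona_V V) (corona_E V E) S"
    and xy: "corona_mmd V E x y"
  shows "x \<in> S \<or> y \<in> S"
proof -
  obtain z where "z \<in> S" "on_geodesic (corona_E V E) y z x \<or> on_geodesic (corona_E V E) x z y"
    using S corona_mmd_in_corona_V[OF xy] unfolding strong_resolving_def by metis
  moreover have "z \<in> corona_V V" using \<open>z \<in> S\<close> S unfolding strong_resolving_def by blast
  ultimately have "z = x \<or> z = y"
    using on_geodesic_corona_mmd[OF g xy] on_geodesic_corona_mmd[OF g corona_mmd_sym[OF g xy]]
    by blast
  then show ?thesis using \<open>z \<in> S\<close> by blast
qed

lemma strong_resolving_corona_if_cover:
  assumes g: "graph V E" and nu: "universal_vertices V E = {}" and "S \<subseteq> corona_V V"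
    and cover: "\<forall>x y. corona_mmd V E x y \<longrightarrow> x \<in> S \<or> y \<in> S"
  shows "strong_resolving (corona_V V) (corona_E V E) S"
proof -
  have "\<exists>z\<in>S. on_geodesic (corona_E V E) y z x \<or> on_geodesic (corona_E V E) x z y"
    if x: "x \<in> corona_V V" and y: "y \<in> corona_V V" and "x \<noteq> y" for x y
  proof (cases "x \<in> S \<or> y \<in> S")
    case True
    have "on_geodesic (corona_E V E) a b b" if "a \<in> corona_V V" "b \<in> corona_V V" for a b
      using on_geodesic_corona_iff[OF that] by simp
    with x y True show ?thesis by blast
  next
    case False
    then have "\<not> corona_mmd V E x y" using cover by blast
    then obtain z where
      "(corona_mmd V E y z \<and> on_geodesic (corona_E V E) y z x) \<or>
       (corona_mmd V E x z \<and> on_geodesic (corona_E V E) x z y)"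
      using corona_pair_resolved[OF g nu x y \<open>x \<noteq> y\<close>] by blast
    moreover from this have "z \<in> S" using False cover by blast
    ultimately show ?thesis by blast
  qed
  with \<open>S \<subseteq> corona_V V\<close> show ?thesis unfolding strong_resolving_def by blast
qed

theorem contains_sr_corona_iff:
  assumes g: "graph V E" and nu: "universal_vertices V E = {}"
  shows "contains_sr (corona_V V) (corona_E V E) M \<longleftrightarrow>
    (\<forall>x y. corona_mmd V E x y \<longrightarrow> x \<in> M \<or> y \<in> M)"
proof
  assume "contains_sr (corona_V V) (corona_E V E) M"
  then obtain S where "S \<subseteq> M" "strong_resolving (corona_V V) (corona_E V E) S"
    unfolding contains_sr_def by blast
  then show "\<forall>x y. corona_mmd V E x y \<longrightarrow> x \<in> M \<or> y \<in> M"
    using cover_if_strong_resolving_corona[OF g] by blast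
next
  assume "\<forall>x y. corona_mmd V E x y \<longrightarrow> x \<in> M \<or> y \<in> M"
  then have "\<forall>x y. corona_mmd V E x y \<longrightarrow> x \<in> M \<inter> corona_V V \<or> y \<in> M \<inter> corona_V V"
    using corona_mmd_in_corona_V by blast
  then have "strong_resolving (corona_V V) (corona_E V E) (M \<inter> corona_V V)"
    by (intro strong_resolving_corona_if_cover[OF g nu]) auto
  then show "contains_sr (corona_V V) (corona_E V E) M"
    unfolding contains_sr_def by blast
qed

section \<open>Maker-Breaker games on the vertex covers of a graph\<close>

definition delete_vertex :: "('a \<Rightarrow> 'a \<Rightarrow> bool) \<Rightarrow> 'a \<Rightarrow> 'a \<Rightarrow> 'a \<Rightarrow> bool" where
  "delete_vertex R u x y \<longleftrightarrow> R x y \<and> x \<noteq> u \<and> y \<noteq> u"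

lemma not_right_unique_if_cherry: "R v a \<Longrightarrow> R v b \<Longrightarrow> a \<noteq> b \<Longrightarrow> \<not> right_unique R"
  by (auto dest: right_uniqueD)

locale cover_game =
  fixes U :: "'v set" and E :: "'v \<Rightarrow> 'v \<Rightarrow> bool" and R :: "'v \<Rightarrow> 'v \<Rightarrow> bool"
  assumes finite_U: "finite U"
    and contains_sr_iff_cover: "\<And>M. contains_sr U E M \<longleftrightarrow> (\<forall>x y. R x y \<longrightarrow> x \<in> M \<or> y \<in> M)"
    and R_in_U: "\<And>x y. R x y \<Longrightarrow> x \<in> U \<and> y \<in> U \<and> x \<noteq> y"
    and R_sym: "\<And>x y. R x y \<Longrightarrow> R y x"
begin

lemma breaker_wins_if_claimed_edge:
  assumes "R x y" "x \<in> B - M" "y \<in> B - M"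
  shows "breaker_wins U E M B t"
  using assms
proof (induction "card (U - (M \<union> B))" arbitrary: M B t rule: less_induct)
  case (less M B t)
  have not_won: "\<not> contains_sr U E M" using less.prems contains_sr_iff_cover by blast
  show ?case
  proof (cases "U - (M \<union> B) = {}")
    case True
    then show ?thesis using not_won by (rule bw_end)
  next
    case False
    have smaller: "card (U - (M' \<union> B')) < card (U - (M \<union> B))"
      if "v \<in> U - (M \<union> B)" "M' \<union> B' = insert v (M \<union> B)" for v M' B'
      using that finite_U by (intro psubset_card_mono) auto
    show ?thesis
    proof (cases t)
      case True
      have "breaker_wins U E (insert v M) B False" if "v \<in> U - (M \<union> B)" for v
        using that less.prems by (intro less.hyps[OF smaller[OF that]]) auto
      then show ?thesis using True not_won False by (auto intro: bw_maker)
    next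
      case f: False
      obtain v where v: "v \<in> U - (M \<union> B)" using False by blast
      then have "breaker_wins U E M (insert v B) True"
        using less.prems by (intro less.hyps[OF smaller[OF v]]) auto
      then show ?thesis using f not_won v by (auto intro: bw_breaker)
    qed
  qed
qed

text \<open>Breaker claims the centre \<open>v\<close> of the cherry; Maker can block only one of \<open>a\<close>, \<open>b\<close>,
  and Breaker claims the other, owning an uncovered edge.\<close>

lemma breaker_wins_by_cherry:
  assumes R: "R v a" "R v b" "a \<noteq> b" and free: "v \<notin> M \<union> B" "a \<notin> M \<union> B" "b \<notin> M \<union> B"
  shows "breaker_wins U E M B False"
proof -
  have in_U: "v \<in> U" "a \<in> U" "b \<in> U" "v \<noteq> a" "v \<noteq> b" using R R_in_U by auto
  have not_won: "\<not> contains_sr U E M" using R(1) free by (auto simp: contains_sr_iff_cover)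
  have "breaker_wins U E (insert m M) (insert v B) False" if m: "m \<in> U - (M \<union> insert v B)" for m
  proof -
    define x where "x = (if m = a then b else a)"
    have x: "R v x" "x \<in> U - (insert m M \<union> insert v B)"
      using R in_U free m unfolding x_def by (simp_all split: if_splits)
    then have not_won': "\<not> contains_sr U E (insert m M)"
      unfolding contains_sr_iff_cover using free(1) m by blast
    have "breaker_wins U E (insert m M) (insert x (insert v B)) True"
      using x m free by (intro breaker_wins_if_claimed_edge[OF x(1)]) auto
    then show ?thesis by (rule bw_breaker[OF not_won' x(2)])
  qed
  then have "breaker_wins U E M (insert v B) True"
    using not_won in_U free by (intro bw_maker) auto
  then show ?thesis using not_won in_U free by (intro bw_breaker) auto
qed

text \<open>Invariant: the edges of \<open>R\<close> not yet covered by Maker form a matching of free vertices.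
  Maker answers each claim of Breaker by claiming its partner, or any uncovered vertex if it
  has none.\<close>

lemma maker_wins_if_matching:
  assumes "\<forall>x y. R x y \<longrightarrow> x \<notin> M \<longrightarrow> y \<notin> M \<longrightarrow> x \<notin> B"
    and "right_unique (\<lambda>x y. R x y \<and> x \<notin> M \<and> y \<notin> M)"
  shows "maker_wins U E M B False"
  using assms
proof (induction "card (U - (M \<union> B))" arbitrary: M B rule: less_induct)
  case (less M B)
  note free = less.prems(1) and matching = less.prems(2)
  show ?case
  proof (cases "contains_sr U E M")
    case True
    then show ?thesis by (rule mw_done)
  next
    case False
    then obtain x0 y0 where e0: "R x0 y0" "x0 \<notin> M" "y0 \<notin> M" using contains_sr_iff_cover by blast
    have x0: "x0 \<in> U - (M \<union> B)" using e0 free R_in_U by blast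
    have "maker_wins U E M (insert v B) True" if v: "v \<in> U - (M \<union> B)" for v
    proof -
      obtain w where w: "w \<in> U - (M \<union> insert v B)"
        and answer: "\<And>y. R v y \<Longrightarrow> y \<notin> M \<Longrightarrow> y = w"
      proof (cases "\<exists>w. R v w \<and> w \<notin> M")
        case True
        then obtain w where "R v w" "w \<notin> M" by blast
        moreover have "w \<in> U - (M \<union> insert v B)" using calculation free R_sym R_in_U v by blast
        moreover have "y = w" if "R v y" "y \<notin> M" for y
          using right_uniqueD[OF matching] that calculation v by blast
        ultimately show ?thesis using that by blast
      next
        case False
        have "x0 \<noteq> v" using False e0 by blast
        then show ?thesis using that[of x0] False x0 by blast
      qed
      have "card (U - (insert w M \<union> insert v B)) < card (U - (M \<union> B))"
        using v w finite_U by (intro psubset_card_mono) auto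
      moreover have "\<forall>x y. R x y \<longrightarrow> x \<notin> insert w M \<longrightarrow> y \<notin> insert w M \<longrightarrow> x \<notin> insert v B"
        using free answer R_sym by blast
      moreover have "right_unique (\<lambda>x y. R x y \<and> x \<notin> insert w M \<and> y \<notin> insert w M)"
        using matching by (auto simp: right_unique_def)
      ultimately have "maker_wins U E (insert w M) (insert v B) False" by (rule less.hyps)
      then show ?thesis using w by (intro mw_maker) auto
    qed
    then show ?thesis using x0 by (intro mw_breaker) auto
  qed
qed

lemma breaker_wins_Bgame: "\<not> right_unique R \<Longrightarrow> breaker_wins U E {} {} False"
  unfolding right_unique_def by (auto intro: breaker_wins_by_cherry)

lemma maker_wins_Bgame: "right_unique R \<Longrightarrow> maker_wins U E {} {} False"
  by (rule maker_wins_if_matching) simp_all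

lemma breaker_wins_Mgame:
  assumes "U \<noteq> {}" and cherry: "\<And>m. m \<in> U \<Longrightarrow> \<not> right_unique (delete_vertex R m)"
  shows "breaker_wins U E {} {} True"
proof (rule bw_maker)
  show "\<not> contains_sr U E {}"
    using assms contains_sr_iff_cover unfolding right_unique_def delete_vertex_def by blast
  show "\<forall>m\<in>U - ({} \<union> {}). breaker_wins U E (insert m {}) {} False"
    using cherry unfolding right_unique_def delete_vertex_def by (auto intro: breaker_wins_by_cherry)
qed (use assms in simp)

lemma maker_wins_Mgame:
  assumes "m \<in> U" "right_unique (delete_vertex R m)"
  shows "maker_wins U E {} {} True"
proof (rule mw_maker)
  show "maker_wins U E {m} {} False"
    using assms(2) by (intro maker_wins_if_matching) (simp_all add: delete_vertex_def[abs_def])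
qed (use assms in simp)

end

lemma cover_game_corona:
  assumes g: "graph V E" and nu: "universal_vertices V E = {}"
  shows "cover_game (corona_V V) (corona_E V E) (corona_mmd V E)"
proof
  show "finite (corona_V V)" using g by (simp add: graph_def corona_V_def)
qed (simp_all add: contains_sr_corona_iff[OF g nu] corona_mmd_in_corona_V corona_mmd_sym[OF g])

lemma right_unique_corona_mmd_iff: "right_unique (corona_mmd V E) \<longleftrightarrow> right_unique (mmd_pair V E)"
proof
  assume "right_unique (corona_mmd V E)"
  then show "right_unique (mmd_pair V E)"
    by (intro right_uniqueI) (metis corona_mmd_Some option.inject right_uniqueD)
next
  assume "right_unique (mmd_pair V E)"
  then show "right_unique (corona_mmd V E)"
    by (intro right_uniqueI) (auto simp: corona_mmd_def dest: right_uniqueD)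
qed

lemma right_unique_delete_vertex_corona_mmd:
  "right_unique (delete_vertex (mmd_pair V E) u) \<Longrightarrow>
    right_unique (delete_vertex (corona_mmd V E) (Some u))"
  by (intro right_uniqueI) (auto simp: corona_mmd_def delete_vertex_def dest: right_uniqueD)

lemma delete_vertex_corona_mmd_apex [simp]: "delete_vertex (corona_mmd V E) None = corona_mmd V E"
  by (auto simp: fun_eq_iff delete_vertex_def corona_mmd_def)

lemma not_right_unique_delete_vertex_K22:
  assumes "symp R" "R a c" "R a d" "R b c" "R b d" "a \<noteq> b" "c \<noteq> d" "a \<notin> {c, d}" "b \<notin> {c, d}"
  shows "\<not> right_unique (delete_vertex R m)"
proof -
  have cherry: "\<not> right_unique (delete_vertex R m)"
    if "R v x" "R v y" "x \<noteq> y" "m \<notin> {v, x, y}" for v x y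
    using that by (auto simp: delete_vertex_def dest: right_uniqueD)
  have "R c a" "R c b" "R d a" "R d b" using assms(1-5) by (simp_all add: symp_def)
  then consider "m \<notin> {a, c, d}" | "m = a" | "m = c" | "m = d" by blast
  then show ?thesis
  proof cases
    case 1
    then show ?thesis using cherry[of a c d] assms by blast
  next
    case 2
    then show ?thesis using cherry[of b c d] assms by blast
  next
    case 3
    then show ?thesis using cherry[of d a b] assms \<open>R d a\<close> \<open>R d b\<close> by blast
  next
    case 4
    then show ?thesis using cherry[of c a b] assms \<open>R c a\<close> \<open>R c b\<close> by blast
  qed
qed

lemma outcome_B_corona_if_K22:
  assumes g: "graph V E" and nu: "universal_vertices V E = {}"
    and "mmd_pair V E a c" "mmd_pair V E a d" "mmd_pair V E b c" "mmd_pair V E b d" "a \<noteq> b" "c \<noteq> d"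
  shows "outcome_B (corona_V V) (corona_E V E)"
proof -
  interpret cover_game "corona_V V" "corona_E V E" "corona_mmd V E"
    using g nu by (rule cover_game_corona)
  have "a \<notin> {c, d}" "b \<notin> {c, d}" using assms(3-6) by (auto simp: mmd_pair_def)
  then have K22: "\<not> right_unique (delete_vertex (corona_mmd V E) m)" for m
    using assms(3-8) corona_mmd_sym[OF g]
    by (intro not_right_unique_delete_vertex_K22[of _ "Some a" "Some c" "Some d" "Some b"])
      (auto simp: symp_def)
  have "\<not> right_unique (corona_mmd V E)"
    using K22[of None] by simp
  then show ?thesis
    unfolding outcome_B_def breaker_wins_Mgame_def breaker_wins_Bgame_def
    using breaker_wins_Bgame breaker_wins_Mgame[OF _ K22] by (simp add: corona_V_def)
qed

lemma outcome_N_corona: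
  assumes g: "graph V E" and nu: "universal_vertices V E = {}" and "u \<in> V"
    and "right_unique (delete_vertex (mmd_pair V E) u)" and "\<not> right_unique (mmd_pair V E)"
  shows "outcome_N (corona_V V) (corona_E V E)"
proof -
  interpret cover_game "corona_V V" "corona_E V E" "corona_mmd V E"
    using g nu by (rule cover_game_corona)
  have "right_unique (delete_vertex (corona_mmd V E) (Some u))"
    using assms(4) by (rule right_unique_delete_vertex_corona_mmd)
  moreover have "\<not> right_unique (corona_mmd V E)"
    using assms(5) by (simp add: right_unique_corona_mmd_iff)
  ultimately show ?thesis
    unfolding outcome_N_def maker_wins_Mgame_def breaker_wins_Bgame_def
    using \<open>u \<in> V\<close> maker_wins_Mgame[of "Some u"] breaker_wins_Bgame
    by (auto simp: corona_V_def delete_vertex_def)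
qed

lemma outcome_M_corona:
  assumes g: "graph V E" and nu: "universal_vertices V E = {}" and "right_unique (mmd_pair V E)"
  shows "outcome_M (corona_V V) (corona_E V E)"
proof -
  interpret cover_game "corona_V V" "corona_E V E" "corona_mmd V E"
    using g nu by (rule cover_game_corona)
  have "right_unique (corona_mmd V E)"
    using assms(3) by (simp add: right_unique_corona_mmd_iff)
  then show ?thesis
    unfolding outcome_M_def maker_wins_Mgame_def maker_wins_Bgame_def
    using maker_wins_Mgame[of None] maker_wins_Bgame by (simp add: corona_V_def)
qed

lemma graph_iso_enumeration:
  assumes "distinct xs" "set xs = V" "V2 = {..<length xs}"
    and edges: "\<And>i j. i < length xs \<Longrightarrow> j < length xs \<Longrightarrow> E (xs ! i) (xs ! j) \<longleftrightarrow> E2 i j"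
  shows "graph_iso V E V2 E2"
proof -
  have bij: "bij_betw ((!) xs) V2 V" using assms(1-3) by (intro bij_betw_nth) auto
  let ?f = "inv_into V2 ((!) xs)"
  have "E x y \<longleftrightarrow> E2 (?f x) (?f y)" if "x \<in> V" "y \<in> V" for x y
  proof -
    have "?f x \<in> V2" "?f y \<in> V2" "xs ! ?f x = x" "xs ! ?f y = y"
      using that bij by (auto simp: bij_betw_def inv_into_into f_inv_into_f)
    then show ?thesis using edges assms(3) by (metis lessThan_iff)
  qed
  then show ?thesis unfolding graph_iso_def using bij_betw_inv_into[OF bij] by blast
qed

lemma graph_iso_empty_graph:
  assumes "graph V E" "card V = k" "\<And>x y. \<not> E x y"
  shows "graph_iso V E (empty_graph_V k) empty_graph_E"
proof -
  obtain xs where "set xs = V" "distinct xs"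
    using assms(1) finite_distinct_list unfolding graph_def by blast
  moreover have "length xs = k" using calculation assms(2) distinct_card by fastforce
  ultimately show ?thesis
    using assms(3) by (intro graph_iso_enumeration) (auto simp: empty_graph_V_def empty_graph_E_def)
qed

lemma graph_iso_K1K2:
  assumes g: "graph V E" and "V = {u, a, b}" "distinct [u, a, b]" "\<And>w. \<not> E u w" "E a b"
  shows "graph_iso V E K1K2_V K1K2_E"
proof -
  have "\<not> E w u" "\<not> E w w" "E b a" for w using g assms(4,5) unfolding graph_def by blast+
  with assms(2-5) show ?thesis
    by (intro graph_iso_enumeration[of "[u, a, b]"])
      (auto simp: K1K2_V_def K1K2_E_def less_Suc_eq numeral_3_eq_3 doubleton_eq_iff)
qed

lemma graph_iso_K1P3:
  assumes g: "graph V E" and "V = {u, a, b, c}" "distinct [u, a, b, c]" "\<And>w. \<not> E u w"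
    "E a b" "E b c" "\<not> E a c"
  shows "graph_iso V E K1P3_V K1P3_E"
proof -
  have "\<not> E w u" "\<not> E w w" "E b a" "E c b" "\<not> E c a" for w
    using g assms(4-7) unfolding graph_def by blast+
  with assms(2-7) show ?thesis
    by (intro graph_iso_enumeration[of "[u, a, b, c]"])
      (auto simp: K1P3_V_def K1P3_E_def less_Suc_eq numeral_3_eq_3 doubleton_eq_iff)
qed

lemma mmd_pair_graph_iso:
  assumes bij: "bij_betw f V V2" and edges: "\<forall>x\<in>V. \<forall>y\<in>V. E x y \<longleftrightarrow> E2 (f x) (f y)"
  shows "mmd_pair V E a b \<longleftrightarrow> a \<in> V \<and> b \<in> V \<and> mmd_pair V2 E2 (f a) (f b)"
proof -
  have "f ` V = V2" "inj_on f V" using bij by (auto simp: bij_betw_def)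
  then show ?thesis using edges unfolding mmd_pair_def by (auto simp: inj_on_eq_iff)
qed

lemma outcome_N_corona_if_iso:
  assumes g: "graph V E" and nu: "universal_vertices V E = {}" and iso: "graph_iso V E V2 E2"
    and matching: "right_unique (delete_vertex (mmd_pair V2 E2) u2)"
    and cherry: "\<not> right_unique (mmd_pair V2 E2)"
  shows "outcome_N (corona_V V) (corona_E V E)"
proof -
  obtain f where bij: "bij_betw f V V2" and edges: "\<forall>x\<in>V. \<forall>y\<in>V. E x y \<longleftrightarrow> E2 (f x) (f y)"
    using iso unfolding graph_iso_def by blast
  have inj: "inj_on f V" and surj: "f ` V = V2" using bij by (auto simp: bij_betw_def)
  note pull = mmd_pair_graph_iso[OF bij edges]
  obtain v2 a2 b2 where "mmd_pair V2 E2 v2 a2" "mmd_pair V2 E2 v2 b2" "a2 \<noteq> b2"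
    using cherry unfolding right_unique_def by blast
  moreover from this obtain v a b where "v \<in> V" "a \<in> V" "b \<in> V" "f v = v2" "f a = a2" "f b = b2"
    using surj unfolding mmd_pair_def by (metis imageE)
  ultimately have "mmd_pair V E v a" "mmd_pair V E v b" "a \<noteq> b" using pull by auto
  then have "\<not> right_unique (mmd_pair V E)" by (rule not_right_unique_if_cherry)
  show ?thesis
  proof (cases "u2 \<in> V2")
    case True
    then obtain u where "u \<in> V" "f u = u2" using surj by blast
    moreover have "right_unique (delete_vertex (mmd_pair V E) u)"
    proof (rule right_uniqueI)
      fix x y z assume "delete_vertex (mmd_pair V E) u x y" "delete_vertex (mmd_pair V E) u x z"
      with \<open>u \<in> V\<close> \<open>f u = u2\<close> show "y = z"
        using right_uniqueD[OF matching] inj_on_eq_iff[OF inj]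
        unfolding delete_vertex_def pull by metis
    qed
    ultimately show ?thesis using outcome_N_corona[OF g nu] \<open>\<not> right_unique (mmd_pair V E)\<close> by blast
  next
    case False
    then have "delete_vertex (mmd_pair V2 E2) u2 = mmd_pair V2 E2"
      by (auto simp: fun_eq_iff delete_vertex_def mmd_pair_def)
    with matching cherry show ?thesis by simp
  qed
qed

lemma outcome_M_corona_if_iso:
  assumes g: "graph V E" and nu: "universal_vertices V E = {}" and iso: "graph_iso V E V2 E2"
    and matching: "right_unique (mmd_pair V2 E2)"
  shows "outcome_M (corona_V V) (corona_E V E)"
proof -
  obtain f where bij: "bij_betw f V V2" and edges: "\<forall>x\<in>V. \<forall>y\<in>V. E x y \<longleftrightarrow> E2 (f x) (f y)"
    using iso unfolding graph_iso_def by blast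
  have inj: "inj_on f V" using bij by (auto simp: bij_betw_def)
  have "right_unique (mmd_pair V E)"
    using right_uniqueD[OF matching] inj_on_eq_iff[OF inj]
    unfolding right_unique_def mmd_pair_graph_iso[OF bij edges] by metis
  then show ?thesis by (rule outcome_M_corona[OF g nu])
qed

text \<open>A bounded form, which the simplifier evaluates on the concrete graphs below.\<close>
lemma right_unique_mmd_pair_on:
  "right_unique (mmd_pair V E) \<longleftrightarrow>
    (\<forall>x\<in>V. \<forall>y\<in>V. \<forall>z\<in>V. mmd_pair V E x y \<longrightarrow> mmd_pair V E x z \<longrightarrow> y = z)"
  "right_unique (delete_vertex (mmd_pair V E) u) \<longleftrightarrow> (\<forall>x\<in>V. \<forall>y\<in>V. \<forall>z\<in>V.
    delete_vertex (mmd_pair V E) u x y \<longrightarrow> delete_vertex (mmd_pair V E) u x z \<longrightarrow> y = z)"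
  unfolding right_unique_def delete_vertex_def mmd_pair_def by blast+

lemma mmd_pair_K1P3:
  "right_unique (delete_vertex (mmd_pair K1P3_V K1P3_E) 0)"
  "\<not> right_unique (mmd_pair K1P3_V K1P3_E)"
proof -
  show "right_unique (delete_vertex (mmd_pair K1P3_V K1P3_E) 0)"
    unfolding right_unique_mmd_pair_on by (simp add: delete_vertex_def mmd_pair_def K1P3_V_def K1P3_E_def doubleton_eq_iff)
  show "\<not> right_unique (mmd_pair K1P3_V K1P3_E)"
    by (rule not_right_unique_if_cherry[of _ 0 1 2]) (simp_all add: mmd_pair_def K1P3_V_def K1P3_E_def doubleton_eq_iff)
qed

lemma mmd_pair_K1K2:
  "right_unique (delete_vertex (mmd_pair K1K2_V K1K2_E) 0)"
  "\<not> right_unique (mmd_pair K1K2_V K1K2_E)"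
proof -
  show "right_unique (delete_vertex (mmd_pair K1K2_V K1K2_E) 0)"
    unfolding right_unique_mmd_pair_on by (simp add: delete_vertex_def mmd_pair_def K1K2_V_def K1K2_E_def doubleton_eq_iff)
  show "\<not> right_unique (mmd_pair K1K2_V K1K2_E)"
    by (rule not_right_unique_if_cherry[of _ 0 1 2]) (simp_all add: mmd_pair_def K1K2_V_def K1K2_E_def doubleton_eq_iff)
qed

lemma mmd_pair_empty_graph_3:
  "right_unique (delete_vertex (mmd_pair (empty_graph_V 3) empty_graph_E) 0)"
  "\<not> right_unique (mmd_pair (empty_graph_V 3) empty_graph_E)"
proof -
  show "right_unique (delete_vertex (mmd_pair (empty_graph_V 3) empty_graph_E) 0)"
    unfolding right_unique_mmd_pair_on by (simp add: delete_vertex_def mmd_pair_def empty_graph_V_def empty_graph_E_def)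
  show "\<not> right_unique (mmd_pair (empty_graph_V 3) empty_graph_E)"
    by (rule not_right_unique_if_cherry[of _ 0 1 2]) (simp_all add: mmd_pair_def empty_graph_V_def empty_graph_E_def)
qed

lemma mmd_pair_empty_graph_2: "right_unique (mmd_pair (empty_graph_V 2) empty_graph_E)"
  unfolding right_unique_mmd_pair_on
  by (simp add: mmd_pair_def empty_graph_V_def empty_graph_E_def)

section \<open>When the strong resolving graph is a matching\<close>

definition non_neighbours :: "'a set \<Rightarrow> ('a \<Rightarrow> 'a \<Rightarrow> bool) \<Rightarrow> 'a \<Rightarrow> 'a set" where
  "non_neighbours V E x = {y \<in> V. y \<noteq> x \<and> \<not> E x y}"

lemma universal_vertices_iff: "x \<in> universal_vertices V E \<longleftrightarrow> x \<in> V \<and> non_neighbours V E x = {}"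
  by (auto simp: universal_vertices_def non_neighbours_def)

lemma non_neighbours_sym: "graph V E \<Longrightarrow> x \<in> V \<Longrightarrow> y \<in> non_neighbours V E x \<Longrightarrow> x \<in> non_neighbours V E y"
  by (auto simp: non_neighbours_def graph_def)

lemma mmd_pair_non_neighbour: "x \<in> V \<Longrightarrow> y \<in> non_neighbours V E x \<Longrightarrow> mmd_pair V E x y"
  by (auto simp: non_neighbours_def mmd_pair_def)

lemma mmd_pair_universal:
  "x \<in> universal_vertices V E \<Longrightarrow> y \<in> universal_vertices V E \<Longrightarrow> x \<noteq> y \<Longrightarrow> mmd_pair V E x y"
  by (auto simp: universal_vertices_def mmd_pair_def)

lemma non_neighbour_of_twin:
  assumes "mmd_pair V E x y" "E x y" "w \<in> non_neighbours V E x" "w \<noteq> y"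
  shows "w \<in> non_neighbours V E y"
  using assms unfolding mmd_pair_def non_neighbours_def by blast

lemma right_unique_mmd_pair_imp:
  assumes g: "graph V E" and "right_unique (mmd_pair V E)"
  shows "\<forall>x\<in>V. card (non_neighbours V E x) \<le> 1" and "card (universal_vertices V E) \<le> 2"
proof -
  have fin: "finite V" using g by (simp add: graph_def)
  show "\<forall>x\<in>V. card (non_neighbours V E x) \<le> 1"
  proof
    fix x assume "x \<in> V"
    then have "\<forall>y\<in>non_neighbours V E x. \<forall>z\<in>non_neighbours V E x. y = z"
      using mmd_pair_non_neighbour right_uniqueD[OF assms(2)] by metis
    moreover have "finite (non_neighbours V E x)" using fin by (simp add: non_neighbours_def)
    ultimately show "card (non_neighbours V E x) \<le> 1" by (simp add: card_le_Suc0_iff_eq)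
  qed
  show "card (universal_vertices V E) \<le> 2"
  proof (cases "universal_vertices V E = {}")
    case False
    then obtain x where x: "x \<in> universal_vertices V E" by blast
    have "\<forall>y\<in>universal_vertices V E - {x}. \<forall>z\<in>universal_vertices V E - {x}. y = z"
      using mmd_pair_universal[OF x] right_uniqueD[OF assms(2)] by blast
    moreover have "finite (universal_vertices V E - {x})" using fin by (simp add: universal_vertices_def)
    ultimately have "card (universal_vertices V E - {x}) \<le> 1" by (simp add: card_le_Suc0_iff_eq)
    then show ?thesis using x fin by (simp add: universal_vertices_def)
  qed simp
qed

context
  fixes V :: "'a set" and E :: "'a \<Rightarrow> 'a \<Rightarrow> bool"
  assumes g: "graph V E" and nn: "\<forall>x\<in>V. card (non_neighbours V E x) \<le> 1"
begin

lemma non_neighbour_unique: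
  assumes "x \<in> V" "y \<in> non_neighbours V E x" "z \<in> non_neighbours V E x"
  shows "y = z"
proof -
  have "finite (non_neighbours V E x)" using g by (simp add: graph_def non_neighbours_def)
  then show "y = z" using nn assms by (auto simp: card_le_Suc0_iff_eq)
qed

lemma mmd_pair_twin_and_non_neighbour:
  assumes "mmd_pair V E x y" "mmd_pair V E x z" "\<not> E x y" "E x z"
  shows "y = z"
proof (rule ccontr)
  assume "y \<noteq> z"
  have y: "y \<in> non_neighbours V E x" using assms(1,3) by (auto simp: mmd_pair_def non_neighbours_def)
  have "x \<in> V" "z \<in> V" "x \<noteq> z" using assms(2) by (auto simp: mmd_pair_def)
  have "y \<in> non_neighbours V E z" using non_neighbour_of_twin[OF assms(2,4) y \<open>y \<noteq> z\<close>] .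
  then have "z \<in> non_neighbours V E y" using non_neighbours_sym[OF g \<open>z \<in> V\<close>] by blast
  moreover have "x \<in> non_neighbours V E y" using non_neighbours_sym[OF g \<open>x \<in> V\<close> y] .
  ultimately show False using non_neighbour_unique \<open>x \<noteq> z\<close> y by (auto simp: non_neighbours_def)
qed

lemma mmd_pair_twin_universal:
  assumes "mmd_pair V E x y" "E x y"
  shows "x \<in> universal_vertices V E"
proof -
  have x: "x \<in> V" "y \<in> V" "x \<noteq> y" using assms(1) by (auto simp: mmd_pair_def)
  have "non_neighbours V E x = {}"
  proof (rule ccontr)
    assume "non_neighbours V E x \<noteq> {}"
    then obtain w where w: "w \<in> non_neighbours V E x" by blast
    have "w \<noteq> y" "w \<in> V" using w assms(2) by (auto simp: non_neighbours_def)
    then have "w \<in> non_neighbours V E y" using non_neighbour_of_twin[OF assms w] by blast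
    then have "x \<in> non_neighbours V E w" "y \<in> non_neighbours V E w"
      using non_neighbours_sym[OF g x(1) w] non_neighbours_sym[OF g x(2)] by blast+
    then show False using non_neighbour_unique[OF \<open>w \<in> V\<close>] x(3) by blast
  qed
  then show ?thesis using x by (simp add: universal_vertices_iff)
qed

text \<open>Two mutually maximally distant partners of one vertex force either a vertex with two
  non-neighbours or three pairwise twin universal vertices.\<close>

lemma right_unique_mmd_pair_if:
  assumes univ: "card (universal_vertices V E) \<le> 2"
  shows "right_unique (mmd_pair V E)"
proof (rule right_uniqueI, rule ccontr)
  fix x y z assume xy: "mmd_pair V E x y" and xz: "mmd_pair V E x z" and "y \<noteq> z"
  have sym: "E a b \<Longrightarrow> E b a" for a b using g by (simp add: graph_def)
  consider "\<not> E x y" "\<not> E x z" | "\<not> E x y" "E x z" | "E x y" "\<not> E x z" | "E x y" "E x z"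
    by blast
  then show False
  proof cases
    case 1
    then show False using xy xz \<open>y \<noteq> z\<close> non_neighbour_unique[of x y z]
      by (auto simp: mmd_pair_def non_neighbours_def)
  next
    case 2
    then show False using mmd_pair_twin_and_non_neighbour xy xz \<open>y \<noteq> z\<close> by blast
  next
    case 3
    then show False using mmd_pair_twin_and_non_neighbour xy xz \<open>y \<noteq> z\<close> by blast
  next
    case 4
    have "mmd_pair V E y x" "mmd_pair V E z x" "E y x" "E z x"
      using 4 xy xz mmd_pair_sym[OF g] sym by blast+
    then have "{x, y, z} \<subseteq> universal_vertices V E"
      using mmd_pair_twin_universal xy 4 by blast
    moreover have "card {x, y, z} = 3" using xy xz \<open>y \<noteq> z\<close> by (auto simp: mmd_pair_def)
    moreover have "finite V" using g by (simp add: graph_def)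
    ultimately show False
      using univ card_mono[of "universal_vertices V E" "{x, y, z}"]
      by (simp add: universal_vertices_def)
  qed
qed

end

theorem right_unique_mmd_pair_iff:
  assumes "graph V E"
  shows "right_unique (mmd_pair V E) \<longleftrightarrow>
    (\<forall>x\<in>V. card (non_neighbours V E x) \<le> 1) \<and> card (universal_vertices V E) \<le> 2"
  using right_unique_mmd_pair_imp[OF assms] right_unique_mmd_pair_if[OF assms] by blast

lemma degree_add_card_non_neighbours:
  assumes g: "graph V E" and "x \<in> V"
  shows "degree V E x + card (non_neighbours V E x) = card V - 1"
proof -
  have "{v \<in> V. E x v} \<union> non_neighbours V E x = V - {x}"
    "{v \<in> V. E x v} \<inter> non_neighbours V E x = {}"
    using g by (auto simp: non_neighbours_def graph_def)
  moreover have "finite V" using g by (simp add: graph_def)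
  ultimately show ?thesis
    using \<open>x \<in> V\<close> card_Un_disjoint[of "{v \<in> V. E x v}" "non_neighbours V E x"]
    by (simp add: degree_def non_neighbours_def)
qed

lemma special_Hstar_iff:
  assumes g: "graph W F"
  shows "special_Hstar W F \<longleftrightarrow> connected_graph W F \<and> 4 \<le> card W \<and> right_unique (mmd_pair W F)"
proof -
  have fin: "finite (non_neighbours W F x)" for x
    using g by (simp add: graph_def non_neighbours_def)
  have degree_cases: "degree W F x = card W - 2 \<or> degree W F x = card W - 1 \<longleftrightarrow>
      card (non_neighbours W F x) \<le> 1" if "x \<in> W" "4 \<le> card W" for x
    using degree_add_card_non_neighbours[OF g \<open>x \<in> W\<close>] that(2) by linarith
  have "degree W F x = card W - 1 \<longleftrightarrow> x \<in> universal_vertices W F" if "x \<in> W" for x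
    using degree_add_card_non_neighbours[OF g that] that fin[of x]
    by (auto simp: universal_vertices_iff)
  then have "{w \<in> W. degree W F w = card W - 1} = universal_vertices W F"
    by (auto simp: universal_vertices_def)
  then show ?thesis
    unfolding special_Hstar_def right_unique_mmd_pair_iff[OF g] using degree_cases by auto
qed

lemma path_if_right_unique_mmd_pair_card_3:
  assumes g: "graph W F" and card: "card W = 3" and matching: "right_unique (mmd_pair W F)"
  obtains x y z where "W = {x, y, z}" "distinct [x, y, z]" "F x y" "F y z" "\<not> F x z"
proof -
  have fin: "finite W" using g by (simp add: graph_def)
  have nn: "\<forall>x\<in>W. card (non_neighbours W F x) \<le> 1" and univ: "card (universal_vertices W F) \<le> 2"
    using matching right_unique_mmd_pair_iff[OF g] by blast+
  note nn_unique = non_neighbour_unique[OF g nn]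
  have "universal_vertices W F \<noteq> W" using univ card by auto
  moreover have "universal_vertices W F \<subseteq> W" by (auto simp: universal_vertices_def)
  ultimately obtain x where "x \<in> W" "x \<notin> universal_vertices W F" by blast
  then have x: "x \<in> W" "non_neighbours W F x \<noteq> {}" by (simp_all add: universal_vertices_iff)
  then obtain y where y: "y \<in> non_neighbours W F x" by blast
  have "card {x, y} \<le> 2" by (simp add: card_insert_if)
  then have "\<not> W \<subseteq> {x, y}" using card card_mono[of "{x, y}" W] by auto
  then obtain z where z: "z \<in> W" "z \<noteq> x" "z \<noteq> y" by blast
  have xy: "y \<in> W" "y \<noteq> x" "\<not> F x y" using y by (auto simp: non_neighbours_def)
  have "{x, z, y} = W"
    using x(1) xy z card fin by (intro card_subset_eq) auto
  moreover have "F x z" using nn_unique[OF x(1) y, of z] z by (auto simp: non_neighbours_def)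
  moreover have "F z y"
  proof (rule ccontr)
    assume "\<not> F z y"
    then have "z \<in> non_neighbours W F y" "x \<in> non_neighbours W F y"
      using g xy z non_neighbours_sym[OF g x(1) y] by (auto simp: non_neighbours_def graph_def)
    then show False using nn_unique[OF xy(1)] z(2) by blast
  qed
  ultimately show thesis using that[of x z y] xy z by auto
qed

lemma two_elements_if_card_ge_2:
  assumes "2 \<le> card A"
  obtains a b where "a \<in> A" "b \<in> A" "a \<noteq> b"
proof -
  obtain T where "T \<subseteq> A" "card T = 2" using assms by (rule obtain_subset_with_card_n)
  then show thesis using that by (auto simp: card_2_iff)
qed

lemma component_eq:
  assumes "graph V E" "reachable E x y"
  shows "{z \<in> V. reachable E x z} = {z \<in> V. reachable E y z}"
proof -
  have "reachable E y x" using reachable_sym[OF assms] .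
  with assms(2) show ?thesis by (auto intro: reachable_trans)
qed

lemma component_representatives:
  assumes g: "graph V E"
  obtains S where "S \<subseteq> V" "card S = num_components V E" "pairwise (\<lambda>x y. \<not> reachable E x y) S"
    "\<forall>y\<in>V. \<exists>x\<in>S. reachable E x y"
proof -
  define C where "C x = {y \<in> V. reachable E x y}" for x
  define rep where "rep = inv_into V C"
  have rep: "rep (C x) \<in> V" "C (rep (C x)) = C x" if "x \<in> V" for x
    using that by (auto simp: rep_def inv_into_into f_inv_into_f)
  have "rep ` C ` V \<subseteq> V" using rep by blast
  moreover have "card (rep ` C ` V) = num_components V E"
    unfolding num_components_def C_def[symmetric] rep_def
    by (rule card_image) (rule inj_on_inv_into, simp)
  moreover have "\<not> reachable E a b" if "a \<in> rep ` C ` V" "b \<in> rep ` C ` V" "a \<noteq> b" for a b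
  proof
    assume "reachable E a b"
    then have "C a = C b" unfolding C_def by (rule component_eq[OF g])
    with that rep show False by auto
  qed
  then have "pairwise (\<lambda>x y. \<not> reachable E x y) (rep ` C ` V)"
    unfolding pairwise_def by blast
  moreover have "\<forall>y\<in>V. \<exists>x\<in>rep ` C ` V. reachable E x y"
  proof
    fix y assume y: "y \<in> V"
    have "y \<in> C (rep (C y))" using rep(2)[OF y] y by (simp add: C_def)
    then have "reachable E (rep (C y)) y" by (simp add: C_def)
    moreover have "rep (C y) \<in> rep ` C ` V" using y by blast
    ultimately show "\<exists>x\<in>rep ` C ` V. reachable E x y" by blast
  qed
  ultimately show thesis by (rule that)
qed

lemma no_universal_vertex_if_disconnected:
  assumes g: "graph V E" and "2 \<le> num_components V E"
  shows "universal_vertices V E = {}"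
proof (rule ccontr)
  assume "universal_vertices V E \<noteq> {}"
  then obtain x where x: "x \<in> V" "\<forall>y\<in>V. y \<noteq> x \<longrightarrow> E x y"
    unfolding universal_vertices_def by blast
  then have reach: "reachable E x y" if "y \<in> V" for y
    using that by (cases "y = x") (auto intro: reachable_edge)
  obtain S where S: "S \<subseteq> V" "card S = num_components V E" "pairwise (\<lambda>x y. \<not> reachable E x y) S"
    using g by (rule component_representatives)
  have "2 \<le> card S" using S(2) assms(2) by simp
  then obtain a b where ab: "a \<in> S" "b \<in> S" "a \<noteq> b" by (rule two_elements_if_card_ge_2)
  then have "reachable E x a" "reachable E x b" using reach S(1) by blast+
  then have "reachable E a b" using reachable_sym[OF g] reachable_trans by metis
  with ab S(3) show False by (auto simp: pairwise_def)
qed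

lemma graph_induced: "graph V E \<Longrightarrow> W \<subseteq> V \<Longrightarrow> graph W (induced W E)"
  by (auto simp: graph_def induced_def finite_subset)

lemma mmd_pair_isolated:
  "u \<in> V \<Longrightarrow> (\<And>w. \<not> E u w) \<Longrightarrow> a \<in> V \<Longrightarrow> a \<noteq> u \<Longrightarrow> mmd_pair V E u a"
  by (simp add: mmd_pair_def)

lemma delete_vertex_mmd_pair_isolated:
  assumes g: "graph V E" and u: "\<And>w. \<not> E u w"
  shows "delete_vertex (mmd_pair V E) u = mmd_pair (V - {u}) (induced (V - {u}) E)"
proof -
  have "\<not> E w u" for w using g u unfolding graph_def by blast
  then show ?thesis
    by (auto simp: fun_eq_iff delete_vertex_def mmd_pair_def induced_def)
qed

lemma outcome_N_corona_K1_union_special: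
  assumes g: "graph V E" and nu: "universal_vertices V E = {}" and "K1_union_special V E"
  shows "outcome_N (corona_V V) (corona_E V E)"
proof -
  obtain u where u: "u \<in> V" "\<And>w. \<not> E u w"
    and special: "special_Hstar (V - {u}) (induced (V - {u}) E)"
    using assms(3) unfolding K1_union_special_def by blast
  have g': "graph (V - {u}) (induced (V - {u}) E)" using g by (rule graph_induced) blast
  have "right_unique (delete_vertex (mmd_pair V E) u)"
    using special special_Hstar_iff[OF g'] delete_vertex_mmd_pair_isolated[OF g u(2)] by simp
  moreover have "\<not> right_unique (mmd_pair V E)"
  proof -
    have "4 \<le> card (V - {u})" using special unfolding special_Hstar_def by blast
    then have "2 \<le> card (V - {u})" by linarith
    then obtain a b where "a \<in> V - {u}" "b \<in> V - {u}" "a \<noteq> b"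
      by (rule two_elements_if_card_ge_2)
    then have "mmd_pair V E u a" "mmd_pair V E u b"
      using u by (simp_all add: mmd_pair_isolated)
    with \<open>a \<noteq> b\<close> show ?thesis by (intro not_right_unique_if_cherry)
  qed
  ultimately show ?thesis using outcome_N_corona[OF g nu u(1)] by blast
qed

lemma connected_graph_remove_isolated:
  assumes g: "graph V E" and u: "\<And>w. \<not> E u w" and "V - {u} \<noteq> {}"
    and reach: "\<forall>x\<in>V - {u}. \<forall>y\<in>V - {u}. reachable E x y"
  shows "connected_graph (V - {u}) (induced (V - {u}) E)"
proof -
  have closed: "b \<in> V - {u}" if "E a b" "a \<in> V - {u}" for a b
    using g u that unfolding graph_def by blast
  have "reachable (induced (V - {u}) E) x y" if "x \<in> V - {u}" "y \<in> V - {u}" for x y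
    using reachable_induced[of E x y "V - {u}"] reach that closed by blast
  with assms(3) show ?thesis unfolding connected_graph_def by blast
qed

lemma K1_union_special_if_right_unique:
  assumes g: "graph V E" and u: "u \<in> V" "\<And>w. \<not> E u w" and "4 \<le> card (V - {u})"
    and reach: "\<forall>x\<in>V - {u}. \<forall>y\<in>V - {u}. reachable E x y"
    and matching: "right_unique (mmd_pair (V - {u}) (induced (V - {u}) E))"
  shows "K1_union_special V E"
proof -
  have "V - {u} \<noteq> {}"
  proof
    assume "V - {u} = {}"
    then have "card (V - {u}) = 0" by (simp only: card.empty)
    with assms(4) show False by simp
  qed
  then have "connected_graph (V - {u}) (induced (V - {u}) E)"
    using g u(2) reach by (intro connected_graph_remove_isolated)
  moreover have "graph (V - {u}) (induced (V - {u}) E)" using g by (rule graph_induced) blast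
  ultimately have "special_Hstar (V - {u}) (induced (V - {u}) E)"
    using assms(4) matching by (simp add: special_Hstar_iff)
  then show ?thesis using u unfolding K1_union_special_def by blast
qed

lemma exceptional_if_right_unique:
  assumes g: "graph V E" and u: "u \<in> V" "\<And>w. \<not> E u w" and ne: "V - {u} \<noteq> {}"
    and reach: "\<forall>x\<in>V - {u}. \<forall>y\<in>V - {u}. reachable E x y"
    and matching: "right_unique (mmd_pair (V - {u}) (induced (V - {u}) E))"
  shows "graph_iso V E (empty_graph_V 2) empty_graph_E \<or> graph_iso V E K1K2_V K1K2_E
    \<or> graph_iso V E K1P3_V K1P3_E \<or> K1_union_special V E"
proof -
  define W where "W = V - {u}"
  have irrefl: "\<not> E a a" and in_W: "E a b \<Longrightarrow> a \<in> W \<and> b \<in> W" for a b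
    using g u(2) unfolding graph_def W_def by blast+
  have V: "V = insert u W" and "u \<notin> W" using u(1) unfolding W_def by blast+
  have "finite W" using g by (simp add: graph_def W_def)
  moreover have "W \<noteq> {}" using ne by (simp add: W_def)
  ultimately have "0 < card W" by (simp add: card_gt_0_iff)
  then consider "card W = 1" | "card W = 2" | "card W = 3" | "4 \<le> card W"
    by atomize_elim presburger
  then show ?thesis
  proof cases
    case 1
    then obtain w where "W = {w}" by (rule card_1_singletonE)
    then have "card V = 2" "\<And>x y. \<not> E x y"
      using V \<open>u \<notin> W\<close> in_W irrefl by (auto simp: card_insert_if)
    then show ?thesis using graph_iso_empty_graph[OF g] by blast
  next
    case 2
    then obtain a b where ab: "W = {a, b}" "a \<noteq> b" unfolding card_2_iff by blast
    then have "reachable E a b" using reach unfolding W_def by blast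
    then obtain z where z: "E a z" using reachable_neighbour ab(2) by metis
    then have "z \<in> W" "z \<noteq> a" using in_W irrefl[of a] by auto
    then have "E a b" using z ab(1) by auto
    then show ?thesis using graph_iso_K1K2[OF g, of u a b] V ab \<open>u \<notin> W\<close> u(2) by auto
  next
    case 3
    obtain x y z where xyz: "W = {x, y, z}" "distinct [x, y, z]"
      "induced W E x y" "induced W E y z" "\<not> induced W E x z"
      using graph_induced[OF g] 3 matching unfolding W_def by (rule path_if_right_unique_mmd_pair_card_3) blast
    then show ?thesis
      using graph_iso_K1P3[OF g, of u x y z] V \<open>u \<notin> W\<close> u(2) by (auto simp: induced_def)
  next
    case 4
    then show ?thesis using K1_union_special_if_right_unique[OF g u _ reach matching]
      unfolding W_def by blast
  qed
qed

lemma outcome_B_corona_isolated_vertex: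
  assumes g: "graph V E" and nu: "universal_vertices V E = {}" and u: "u \<in> V" "\<And>w. \<not> E u w"
    and cherry: "\<not> right_unique (mmd_pair (V - {u}) (induced (V - {u}) E))"
  shows "outcome_B (corona_V V) (corona_E V E)"
proof -
  obtain v a b where "delete_vertex (mmd_pair V E) u v a" "delete_vertex (mmd_pair V E) u v b" "a \<noteq> b"
    using cherry unfolding delete_vertex_mmd_pair_isolated[OF g u(2), symmetric] right_unique_def
    by blast
  then have "mmd_pair V E v a" "mmd_pair V E v b" "mmd_pair V E u a" "mmd_pair V E u b" "v \<noteq> u"
    using u by (auto simp: delete_vertex_def mmd_pair_isolated mmd_pair_def)
  then show ?thesis using outcome_B_corona_if_K22[OF g nu] \<open>a \<noteq> b\<close> by blast
qed

lemma two_components_cases: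
  assumes g: "graph V E" and "num_components V E = 2"
  obtains (nontrivial) p p' q q' where "p \<in> V" "p' \<in> V" "q \<in> V" "q' \<in> V" "p \<noteq> p'" "q \<noteq> q'"
      "\<not> reachable E p q" "\<not> reachable E p q'" "\<not> reachable E p' q" "\<not> reachable E p' q'"
  | (isolated) u where "u \<in> V" "\<And>w. \<not> E u w" "V - {u} \<noteq> {}"
      "\<forall>x\<in>V - {u}. \<forall>y\<in>V - {u}. reachable E x y"
proof -
  obtain S where S: "S \<subseteq> V" "card S = 2" "pairwise (\<lambda>x y. \<not> reachable E x y) S"
    and cover: "\<forall>y\<in>V. \<exists>x\<in>S. reachable E x y"
    using g assms(2) by (metis component_representatives)
  then obtain p q where pq: "S = {p, q}" "p \<noteq> q" unfolding card_2_iff by blast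
  have unreachable: "\<not> reachable E p q" "\<not> reachable E q p"
    using S(3) pq by (auto simp: pairwise_def)
  have isolated_case: thesis
    if "a \<in> S" "b \<in> S" "a \<noteq> b" "\<forall>x\<in>V. reachable E a x \<longrightarrow> x = a" for a b
  proof (rule isolated)
    show "a \<in> V" using that(1) S(1) by blast
    show "\<not> E a w" for w using that(4) reachable_edge g unfolding graph_def by metis
    have "b \<in> V - {a}" using that S(1) by blast
    then show "V - {a} \<noteq> {}" by blast
    have "reachable E b x" if "x \<in> V - {a}" for x
      using cover that(1) \<open>\<forall>x\<in>V. reachable E a x \<longrightarrow> x = a\<close> pq \<open>a \<in> S\<close> \<open>b \<in> S\<close> \<open>a \<noteq> b\<close>
      by auto
    then show "\<forall>x\<in>V - {a}. \<forall>y\<in>V - {a}. reachable E x y"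
      using reachable_sym[OF g] reachable_trans by metis
  qed
  show thesis
  proof (cases "\<exists>p'\<in>V. p' \<noteq> p \<and> reachable E p p'")
    case True
    then obtain p' where p': "p' \<in> V" "p' \<noteq> p" "reachable E p p'" by blast
    show thesis
    proof (cases "\<exists>q'\<in>V. q' \<noteq> q \<and> reachable E q q'")
      case True
      then obtain q' where q': "q' \<in> V" "q' \<noteq> q" "reachable E q q'" by blast
      show thesis
      proof (rule nontrivial[of p p' q q'])
        show "p \<in> V" "q \<in> V" using S(1) pq(1) by blast+
        show "\<not> reachable E p q" "\<not> reachable E p q'" "\<not> reachable E p' q" "\<not> reachable E p' q'"
          using unreachable p'(3) q'(3) reachable_sym[OF g] reachable_trans by metis+
      qed (use p' q' in blast)+
    next
      case False
      then show thesis using isolated_case[of q p] pq by blast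
    qed
  next
    case False
    then show thesis using isolated_case[of p q] pq by blast
  qed
qed

lemma outcome_B_two_components:
  assumes g: "graph V E" and c: "num_components V E = 2"
    and "\<not> graph_iso V E (empty_graph_V 2) empty_graph_E" "\<not> graph_iso V E K1K2_V K1K2_E"
    and "\<not> graph_iso V E K1P3_V K1P3_E" "\<not> K1_union_special V E"
  shows "outcome_B (corona_V V) (corona_E V E)"
proof -
  have nu: "universal_vertices V E = {}" using g c by (simp add: no_universal_vertex_if_disconnected)
  from g c show ?thesis
  proof (cases rule: two_components_cases)
    case (nontrivial p p' q q')
    then show ?thesis
      using outcome_B_corona_if_K22[OF g nu, of p q q' p'] mmd_pair_if_unreachable
      by (metis reachable_sym[OF g])
  next
    case (isolated u)
    then have "\<not> right_unique (mmd_pair (V - {u}) (induced (V - {u}) E))"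
      using exceptional_if_right_unique[OF g] assms(3-6) by blast
    then show ?thesis using outcome_B_corona_isolated_vertex[OF g nu] isolated by blast
  qed
qed

lemma outcome_B_three_components:
  assumes g: "graph V E" and c: "num_components V E = 3"
    and not_3K1: "\<not> graph_iso V E (empty_graph_V 3) empty_graph_E"
  shows "outcome_B (corona_V V) (corona_E V E)"
proof -
  have nu: "universal_vertices V E = {}" using g c by (simp add: no_universal_vertex_if_disconnected)
  obtain S where S: "S \<subseteq> V" "card S = 3" "pairwise (\<lambda>x y. \<not> reachable E x y) S"
    and cover: "\<forall>y\<in>V. \<exists>x\<in>S. reachable E x y"
    using g c by (metis component_representatives)
  have "V \<noteq> S"
  proof
    assume "V = S"
    have "\<not> E x y" for x y
    proof
      assume "E x y"
      then have "x \<in> S" "y \<in> S" "x \<noteq> y" using g \<open>V = S\<close> unfolding graph_def by metis+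
      then show False using S(3) reachable_edge[of E x y, OF \<open>E x y\<close>] by (auto simp: pairwise_def)
    qed
    then show False using graph_iso_empty_graph[OF g] S(2) \<open>V = S\<close> not_3K1 by blast
  qed
  then obtain y x where y: "y \<in> V" "y \<notin> S" and x: "x \<in> S" "reachable E x y"
    using S(1) cover by blast
  have "card (S - {x}) = 2" using S(2) x(1) by simp
  then obtain c d where cd: "S - {x} = {c, d}" "c \<noteq> d" unfolding card_2_iff by blast
  have "\<not> reachable E x c" "\<not> reachable E x d"
    using S(3) cd x(1) by (auto simp: pairwise_def)
  moreover from this have "\<not> reachable E y c" "\<not> reachable E y d"
    using x(2) reachable_trans by metis+
  moreover have "x \<in> V" "c \<in> V" "d \<in> V" "x \<noteq> y" using S(1) cd x(1) y by auto
  ultimately show ?thesis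
    using outcome_B_corona_if_K22[OF g nu, of x c d y] mmd_pair_if_unreachable y(1) cd(2) by metis
qed

lemma outcome_B_four_components:
  assumes g: "graph V E" and c: "4 \<le> num_components V E"
  shows "outcome_B (corona_V V) (corona_E V E)"
proof -
  have nu: "universal_vertices V E = {}" using g c by (simp add: no_universal_vertex_if_disconnected)
  obtain S where S: "S \<subseteq> V" "card S = num_components V E" "pairwise (\<lambda>x y. \<not> reachable E x y) S"
    using g by (rule component_representatives)
  then have "2 \<le> card S" using c by simp
  then obtain a b where ab: "a \<in> S" "b \<in> S" "a \<noteq> b" by (rule two_elements_if_card_ge_2)
  have "finite S" using S(1) g by (auto simp: graph_def finite_subset)
  then have "card (S - {a, b}) = card S - 2" using ab by (simp add: card_Diff_subset)
  then have "2 \<le> card (S - {a, b})" using S(2) c by simp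
  then obtain c d where cd: "c \<in> S - {a, b}" "d \<in> S - {a, b}" "c \<noteq> d"
    by (rule two_elements_if_card_ge_2)
  have "mmd_pair V E x y" if "x \<in> {a, b}" "y \<in> {c, d}" for x y
    using that ab cd S(1,3) by (intro mmd_pair_if_unreachable) (auto simp: pairwise_def)
  then show ?thesis using outcome_B_corona_if_K22[OF g nu, of a c d b] ab(3) cd(3) by blast
qed

theorem mainTheorem11:
  fixes V :: "'a set" and E :: "'a \<Rightarrow> 'a \<Rightarrow> bool"
  assumes "graph V E" and "num_components V E \<ge> 2"
  shows "(num_components V E \<ge> 4 \<longrightarrow> outcome_B (corona_V V) (corona_E V E))
    \<and> (num_components V E = 3 \<longrightarrow>
         (graph_iso V E (empty_graph_V 3) empty_graph_E \<longrightarrow> outcome_N (corona_V V) (corona_E V E))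
       \<and> (\<not> graph_iso V E (empty_graph_V 3) empty_graph_E \<longrightarrow> outcome_B (corona_V V) (corona_E V E)))
    \<and> (num_components V E = 2 \<longrightarrow>
         (graph_iso V E (empty_graph_V 2) empty_graph_E \<longrightarrow> outcome_M (corona_V V) (corona_E V E))
       \<and> ((graph_iso V E K1K2_V K1K2_E \<or> graph_iso V E K1P3_V K1P3_E \<or> K1_union_special V E)
            \<longrightarrow> outcome_N (corona_V V) (corona_E V E))
       \<and> (\<not> graph_iso V E (empty_graph_V 2) empty_graph_E \<and> \<not> graph_iso V E K1K2_V K1K2_E
            \<and> \<not> graph_iso V E K1P3_V K1P3_E \<and> \<not> K1_union_special V E
            \<longrightarrow> outcome_B (corona_V V) (corona_E V E)))"
proof -
  note g = assms(1)
  have nu: "universal_vertices V E = {}" using assms by (rule no_universal_vertex_if_disconnected)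
  show ?thesis
    using outcome_B_four_components[OF g] outcome_B_three_components[OF g]
      outcome_B_two_components[OF g] outcome_N_corona_K1_union_special[OF g nu]
      outcome_N_corona_if_iso[OF g nu _ mmd_pair_empty_graph_3]
      outcome_N_corona_if_iso[OF g nu _ mmd_pair_K1K2]
      outcome_N_corona_if_iso[OF g nu _ mmd_pair_K1P3]
      outcome_M_corona_if_iso[OF g nu _ mmd_pair_empty_graph_2]
    by blast
qed

end
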